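(* Let $\alpha\in(0,1)$ and let $m\ge1$ be an integer. The $(m,m)$ Padé approximant $r_m$ of $(1+t)^{-\alpha}$ (normalized so that its denominator equals $1$ at $t=0$) is monotonically decreasing on $[0,\infty)$.
   Context: The $(m,m)$ Padé approximant of $(1+t)^{-\alpha}$ is the rational function $r_m=P_m/Q_m$ with $P_m,Q_m$ polynomials of degree at most $m$, $Q_m(0)=1$, whose Maclaurin expansion agrees with that of $(1+t)^{-\alpha}$ up to and including the coefficient of $t^{2m}$. *)

theory Defs
  imports "HOL-Analysis.Analysis" "HOL-Computational_Algebra.Polynomial"
begin

definition maclaurin_coeff :: "(real \<Rightarrow> real) \<Rightarrow> nat \<Rightarrow> real" where
  "maclaurin_coeff f k = (deriv ^^ k) f 0 / fact k"

definition is_pade_mm :: "real \<Rightarrow> nat \<Rightarrow> real poly \<Rightarrow> real poly \<Rightarrow> bool" where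
  "is_pade_mm \<alpha> m P Q \<longleftrightarrow>
     degree P \<le> m \<and> degree Q \<le> m \<and> poly Q 0 = 1 \<and>
     (\<forall>k\<le>2*m. maclaurin_coeff (\<lambda>t. poly P t / poly Q t) k
               = maclaurin_coeff (\<lambda>t. (1 + t) powr (-\<alpha>)) k)"

end

(*
  Numerator and denominator of r_m are the terminating hypergeometric polynomials
  P = 2F1(-m, \<alpha> - m; -2m; -t) and Q = 2F1(-m, -\<alpha> - m; -2m; -t); for 0 < \<alpha> < 1
  all their coefficients are positive. Q is annihilated by a hypergeometric differential
  operator, and multiplying by F = (1 + t) powr (-\<alpha>), which solves (1 + t) F' + \<alpha> F = 0,
  turns it into the operator of P; hence Q F agrees with P up to t^(2m). The same ODE yields
  the Wronskian identity (1 + t) (P' Q - P Q') + \<alpha> P Q = \<alpha> p_m q_m t^(2m). It shows that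
  P and Q are coprime, so the Pade approximant is unique, and, since P Q \<ge> p_m q_m t^(2m)
  for t \<ge> 0, that P' Q - P Q' \<le> 0 on [0, \<infinity>).
*)
theory Submission
  imports
    Defs
    "HOL-Computational_Algebra.Polynomial_FPS"
    "HOL-Computational_Algebra.Polynomial_Factorial"
    "HOL-Computational_Algebra.Field_as_Ring"
begin

lemma fps_nth_conv_deriv_real_normed:
  fixes f :: "'a :: {banach, real_normed_field} fps"
  assumes "fps_conv_radius f > 0"
  shows "fps_nth f n = (deriv ^^ n) (eval_fps f) 0 / fact n"
  using assms
proof (induction n arbitrary: f)
  case 0
  then show ?case by (simp add: eval_fps_def)
next
  case (Suc n f)
  have "eventually (\<lambda>z. z \<in> eball 0 (fps_conv_radius f)) (nhds (0::'a))"
    using Suc.prems by (intro eventually_nhds_in_open) (auto simp: zero_ereal_def)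
  then have "eventually (\<lambda>z. deriv (eval_fps f) z = eval_fps (fps_deriv f) z) (nhds 0)"
    by eventually_elim (simp add: eval_fps_deriv)
  then have "(deriv ^^ Suc n) (eval_fps f) 0 = (deriv ^^ n) (eval_fps (fps_deriv f)) 0"
    unfolding funpow_Suc_right o_def by (intro higher_deriv_cong_ev refl)
  also have "\<dots> / fact n = fps_nth (fps_deriv f) n"
    using Suc.prems fps_conv_radius_deriv[of f] by (intro Suc.IH [symmetric]) auto
  also have "\<dots> / of_nat (Suc n) = fps_nth f (Suc n)"
    by (simp add: fps_deriv_def del: of_nat_Suc)
  finally show ?case by (simp add: field_split_simps)
qed

lemma maclaurin_coeff_fps_expansion:
  assumes "f has_fps_expansion F"
  shows "maclaurin_coeff f n = fps_nth F n"
proof -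
  have "fps_nth F n = (deriv ^^ n) (eval_fps F) 0 / fact n"
    using assms by (intro fps_nth_conv_deriv_real_normed) (auto simp: has_fps_expansion_def)
  also have "(deriv ^^ n) (eval_fps F) 0 = (deriv ^^ n) f 0"
    using assms by (intro higher_deriv_cong_ev) (auto simp: has_fps_expansion_def)
  finally show ?thesis by (simp add: maclaurin_coeff_def)
qed

lemma has_fps_expansion_binomial_real:
  "(\<lambda>x::real. (1 + x) powr c) has_fps_expansion fps_binomial c"
proof -
  have "eventually (\<lambda>z::real. z \<in> ball 0 1) (nhds 0)"
    by (intro eventually_nhds_in_open) auto
  then have "eventually (\<lambda>z. eval_fps (fps_binomial c) z = (1 + z) powr c) (nhds 0)"
    by eventually_elim (use gen_binomial_real in \<open>auto simp: eval_fps_def sums_iff\<close>)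
  then show ?thesis by (auto simp: has_fps_expansion_def fps_conv_radius_binomial)
qed

definition is_fps_pade :: "'a :: comm_ring_1 fps \<Rightarrow> nat \<Rightarrow> 'a poly \<Rightarrow> 'a poly \<Rightarrow> bool" where
  "is_fps_pade F m A B \<longleftrightarrow> degree A \<le> m \<and> degree B \<le> m \<and>
     (\<forall>k\<le>2 * m. coeff A k = fps_nth (fps_of_poly B * F) k)"

lemma fps_nth_mult_cong:
  assumes "\<And>i. i \<le> k \<Longrightarrow> fps_nth g i = fps_nth h i"
  shows "fps_nth (f * g) k = fps_nth (f * h) k"
  unfolding fps_mult_nth using assms by (intro sum.cong) auto

lemma is_pade_mm_imp_is_fps_pade:
  assumes "is_pade_mm \<alpha> m P Q"
  shows "is_fps_pade (fps_binomial (-\<alpha>)) m P Q"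
proof -
  let ?P = "fps_of_poly P" and ?Q = "fps_of_poly Q"
  have Q0: "fps_nth ?Q 0 \<noteq> 0"
    using assms by (simp add: is_pade_mm_def poly_0_coeff_0)
  have "(\<lambda>t. poly P t / poly Q t) has_fps_expansion ?P / ?Q"
    using Q0 by (intro has_fps_expansion_divide') (auto simp: has_fps_expansion_def)
  then have quotient: "fps_nth (?P / ?Q) k = (-\<alpha>) gchoose k" if "k \<le> 2 * m" for k
    using assms that maclaurin_coeff_fps_expansion[OF has_fps_expansion_binomial_real]
    by (auto simp: is_pade_mm_def maclaurin_coeff_fps_expansion)
  have "?P = ?Q * (?P / ?Q)"
    using Q0 fps_times_divide_eq[of ?Q ?P] by (auto simp: subdegree_eq_0_iff mult.commute)
  then have "coeff P k = fps_nth (?Q * (?P / ?Q)) k" for k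
    by (metis fps_of_poly_nth)
  also have "\<dots> k = fps_nth (?Q * fps_binomial (-\<alpha>)) k" if "k \<le> 2 * m" for k
    using that quotient by (intro fps_nth_mult_cong) simp
  finally show ?thesis
    using assms by (auto simp: is_fps_pade_def is_pade_mm_def)
qed

lemma is_fps_pade_cross_eq:
  assumes "is_fps_pade F m A B" "is_fps_pade F m P Q"
  shows "B * P = Q * A"
proof -
  have "coeff (B * P - Q * A) n = 0" for n
  proof (cases "n \<le> 2 * m")
    case True
    have "coeff (B * P) n = fps_nth (fps_of_poly B * (fps_of_poly Q * F)) n"
      using assms True unfolding fps_of_poly_nth [symmetric] fps_of_poly_mult
      by (intro fps_nth_mult_cong) (auto simp: is_fps_pade_def)
    also have "\<dots> = fps_nth (fps_of_poly Q * (fps_of_poly B * F)) n"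
      by (simp add: mult.left_commute)
    also have "\<dots> = coeff (Q * A) n"
      using assms True unfolding fps_of_poly_nth [symmetric] fps_of_poly_mult
      by (intro fps_nth_mult_cong) (auto simp: is_fps_pade_def)
    finally show ?thesis
      by simp
  next
    case False
    have "degree (B * P - Q * A) \<le> 2 * m"
      using assms degree_mult_le[of B P] degree_mult_le[of Q A]
      by (intro degree_diff_le) (auto simp: is_fps_pade_def)
    with False show ?thesis
      by (intro coeff_eq_0) simp
  qed
  then have "B * P - Q * A = 0"
    by (intro poly_eqI) simp
  then show ?thesis
    by simp
qed

lemma is_fps_pade_unique:
  fixes A B P Q :: "'a :: field_gcd poly"
  assumes "is_fps_pade F m A B" "is_fps_pade F m P Q" "coprime A B" "degree B = m"
    and "poly Q 0 = poly B 0" "poly B 0 \<noteq> 0"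
  shows "P = A \<and> Q = B"
proof -
  have cross: "B * P = Q * A"
    using assms(1,2) by (rule is_fps_pade_cross_eq)
  have "B dvd Q * A"
    using cross by (metis dvd_triv_left)
  moreover have "coprime B A"
    using assms(3) by (simp add: coprime_commute)
  ultimately have "B dvd Q"
    by (simp add: coprime_dvd_mult_left_iff)
  then obtain k where k: "Q = B * k" ..
  have "B \<noteq> 0" "k \<noteq> 0"
    using assms(5,6) k by auto
  then have "degree k = 0"
    using k assms(2,4) by (simp add: degree_mult_eq is_fps_pade_def)
  then obtain c where "k = [:c:]"
    by (rule degree_eq_zeroE)
  with k assms(5,6) have "Q = B"
    by simp
  with cross \<open>B \<noteq> 0\<close> show ?thesis
    by (simp add: mult.commute)
qed

lemma fps_binomial_uminus_ODE:
  "(1 + fps_X) * fps_deriv (fps_binomial (-a)) + fps_const a * fps_binomial (-a)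
     = (0 :: 'a :: field_char_0 fps)"
proof -
  let ?F = "fps_binomial (-a) :: 'a fps"
  have "fps_nth (1 + fps_X :: 'a fps) 0 \<noteq> 0" by simp
  then have "(1 + fps_X) * fps_deriv ?F = fps_const (-a) * ?F"
    using fps_times_divide_eq[of "1 + fps_X" "fps_const (-a) * ?F"]
    by (auto simp: fps_binomial_deriv subdegree_eq_0_iff mult.commute)
  then show ?thesis
    by (simp flip: distrib_right)
qed

text \<open>The hypergeometric operator of 2F1(-m, b - m; -2m; -t), rewritten in the variable t.\<close>
definition hypergeom_op :: "nat \<Rightarrow> real \<Rightarrow> real fps \<Rightarrow> real fps" where
  "hypergeom_op m b y =
     fps_X * (1 + fps_X) * fps_deriv (fps_deriv y)
     + ((1 + fps_const b - 2 * fps_const (real m)) * fps_X - 2 * fps_const (real m)) * fps_deriv y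
     + fps_const (real m) * (fps_const (real m) - fps_const b) * y"

lemma fps_nth_hypergeom_op:
  "fps_nth (hypergeom_op m b y) n =
     (real n + 1) * (real n - 2 * real m) * fps_nth y (Suc n)
     + (real n - real m) * (real n - real m + b) * fps_nth y n"
proof -
  have eq: "hypergeom_op m b y =
          fps_X * (1 + fps_X) * fps_deriv (fps_deriv y)
          + (fps_const (1 + b - 2 * real m) * fps_X - fps_const (2 * real m)) * fps_deriv y
          + fps_const (real m * (real m - b)) * y"
    by (simp add: hypergeom_op_def)
  show ?thesis
    unfolding eq by (cases n; cases "n - 1") (simp_all add: algebra_simps)
qed

lemma hypergeom_op_mult:
  assumes ODE: "(1 + fps_X) * fps_deriv F + fps_const a * F = 0"
  shows "hypergeom_op m a (y * F) = F * hypergeom_op m (-a) y"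
proof -
  have ODE': "(1 + fps_X) * fps_deriv (fps_deriv F) + (1 + fps_const a) * fps_deriv F = 0"
    using arg_cong[OF ODE, of fps_deriv] by (simp add: algebra_simps)
  \<comment> \<open>Stated for free ring elements, since on power series simp would merge the fps_const factors.\<close>
  have ring: "B = - A \<Longrightarrow>
      X * (1 + X) * (Q'' * F + 2 * Q' * F' + Q * F'')
      + ((1 + A - 2 * M) * X - 2 * M) * (Q * F' + Q' * F) + M * (M - A) * (Q * F)
    = F * (X * (1 + X) * Q'' + ((1 + B - 2 * M) * X - 2 * M) * Q' + M * (M - B) * Q)
      + (2 * X * Q' - 2 * M * Q) * ((1 + X) * F' + A * F)
      + X * Q * ((1 + X) * F'' + (1 + A) * F')"
    for X Q Q' Q'' F F' F'' A B M :: "real fps"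
    by (simp add: algebra_simps)
  have d2: "fps_deriv (fps_deriv (y * F)) =
      fps_deriv (fps_deriv y) * F + 2 * fps_deriv y * fps_deriv F + y * fps_deriv (fps_deriv F)"
    by (simp add: algebra_simps)
  have "hypergeom_op m a (y * F) = F * hypergeom_op m (-a) y
      + (2 * fps_X * fps_deriv y - 2 * fps_const (real m) * y) * ((1 + fps_X) * fps_deriv F + fps_const a * F)
      + fps_X * y * ((1 + fps_X) * fps_deriv (fps_deriv F) + (1 + fps_const a) * fps_deriv F)"
    unfolding hypergeom_op_def d2 unfolding fps_deriv_mult by (rule ring) simp
  with ODE ODE' show ?thesis
    by simp
qed

text \<open>At k = 2m the recursion divides by zero, harmlessly: the coefficients vanish from k = m + 1 on.\<close>
fun hypergeom_coeff :: "nat \<Rightarrow> real \<Rightarrow> nat \<Rightarrow> real" where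
  "hypergeom_coeff m b 0 = 1"
| "hypergeom_coeff m b (Suc k) =
     - ((real k - real m) * (real k - real m + b) / ((real k + 1) * (real k - 2 * real m)))
     * hypergeom_coeff m b k"

lemma hypergeom_coeff_eq_0:
  "m < k \<Longrightarrow> hypergeom_coeff m b k = 0"
proof (induction k)
  case (Suc k)
  then show ?case
    by (cases "k = m") auto
qed simp

lemma hypergeom_coeff_pos:
  assumes "\<bar>b\<bar> < 1"
  shows "k \<le> m \<Longrightarrow> hypergeom_coeff m b k > 0"
proof (induction k)
  case (Suc k)
  have "(real k - real m) * (real k - real m + b) > 0"
    using Suc.prems assms by (intro mult_neg_neg) auto
  moreover have "(real k + 1) * (real k - 2 * real m) < 0"
    using Suc.prems by (intro mult_pos_neg) auto
  ultimately show ?case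
    using Suc by (simp add: divide_pos_neg mult_neg_pos)
qed simp

lemma hypergeom_coeff_nonneg:
  "\<bar>b\<bar> < 1 \<Longrightarrow> hypergeom_coeff m b k \<ge> 0"
  using hypergeom_coeff_pos[of b k m] hypergeom_coeff_eq_0[of m k b]
  by (cases "k \<le> m") auto

lemma hypergeom_op_hypergeom_coeff:
  "hypergeom_op m b (Abs_fps (hypergeom_coeff m b)) = 0"
proof (rule fps_ext)
  fix n
  show "fps_nth (hypergeom_op m b (Abs_fps (hypergeom_coeff m b))) n = fps_nth 0 n"
  proof (cases "n = 2 * m")
    case True
    then have "(real n - real m) * hypergeom_coeff m b n = 0"
      using hypergeom_coeff_eq_0[of m n b] by (cases "m = 0") auto
    with True show ?thesis
      by (auto simp: fps_nth_hypergeom_op)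
  next
    case False
    then have "(real n + 1) * (real n - 2 * real m) \<noteq> 0"
      by simp
    then show ?thesis
      by (simp add: fps_nth_hypergeom_op)
  qed
qed

lemma hypergeom_op_eq_0_imp_fps_nth:
  assumes "hypergeom_op m b y = 0"
  shows "k \<le> 2 * m \<Longrightarrow> fps_nth y k = fps_nth y 0 * hypergeom_coeff m b k"
proof (induction k)
  case (Suc k)
  let ?c = "(real k - real m) * (real k - real m + b)" and ?d = "(real k + 1) * (real k - 2 * real m)"
  have "?d \<noteq> 0"
    using Suc.prems by auto
  moreover have "?d * fps_nth y (Suc k) + ?c * fps_nth y k = 0"
    using arg_cong[OF assms, of "\<lambda>f. fps_nth f k"] by (simp add: fps_nth_hypergeom_op)
  ultimately have "fps_nth y (Suc k) = - (?c / ?d) * fps_nth y k"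
    by (simp add: field_simps)
  moreover have "fps_nth y k = fps_nth y 0 * hypergeom_coeff m b k"
    using Suc by simp
  ultimately show ?case
    by simp
qed simp

definition hypergeom_poly :: "nat \<Rightarrow> real \<Rightarrow> real poly" where
  "hypergeom_poly m b = (\<Sum>j\<le>m. monom (hypergeom_coeff m b j) j)"

lemma coeff_hypergeom_poly [simp]:
  "coeff (hypergeom_poly m b) k = hypergeom_coeff m b k"
  using hypergeom_coeff_eq_0[of m k b] by (auto simp: hypergeom_poly_def coeff_sum)

lemma fps_of_hypergeom_poly:
  "fps_of_poly (hypergeom_poly m b) = Abs_fps (hypergeom_coeff m b)"
  by (rule fps_ext) simp

lemma degree_hypergeom_poly_le:
  "degree (hypergeom_poly m b) \<le> m"
  by (rule degree_le) (simp add: hypergeom_coeff_eq_0)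

lemma degree_hypergeom_poly:
  assumes "\<bar>b\<bar> < 1"
  shows "degree (hypergeom_poly m b) = m"
proof (rule antisym)
  show "degree (hypergeom_poly m b) \<le> m"
    by (rule degree_hypergeom_poly_le)
  show "m \<le> degree (hypergeom_poly m b)"
    using hypergeom_coeff_pos[OF assms, of m m] by (intro le_degree) simp
qed

lemma poly_hypergeom_poly_0 [simp]:
  "poly (hypergeom_poly m b) 0 = 1"
  by (simp add: poly_0_coeff_0)

lemma is_fps_pade_hypergeom_poly:
  assumes ODE: "(1 + fps_X) * fps_deriv F + fps_const a * F = 0" and "fps_nth F 0 = 1"
  shows "is_fps_pade F m (hypergeom_poly m a) (hypergeom_poly m (-a))"
proof -
  define y where "y = fps_of_poly (hypergeom_poly m (-a)) * F"
  have "hypergeom_op m a y = F * hypergeom_op m (-a) (fps_of_poly (hypergeom_poly m (-a)))"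
    unfolding y_def by (rule hypergeom_op_mult[OF ODE])
  also have "\<dots> = 0"
    by (simp add: fps_of_hypergeom_poly hypergeom_op_hypergeom_coeff)
  finally have "fps_nth y k = fps_nth y 0 * hypergeom_coeff m a k" if "k \<le> 2 * m" for k
    using that by (rule hypergeom_op_eq_0_imp_fps_nth)
  moreover have "fps_nth y 0 = 1"
    using assms(2) by (simp add: y_def)
  ultimately show ?thesis
    unfolding is_fps_pade_def y_def [symmetric] by (simp add: degree_hypergeom_poly_le)
qed

definition wronskian :: "'a :: idom poly \<Rightarrow> 'a poly \<Rightarrow> 'a poly" where
  "wronskian A B = pderiv A * B - A * pderiv B"

lemma coeff_wronskian_eq_0:
  fixes A B :: "'a :: {idom, ring_char_0} poly"
  assumes "degree A = m" "degree B = m" "2 * m \<le> Suc n"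
  shows "coeff (wronskian A B) n = 0"
proof (cases "m = 0")
  case True
  then have "pderiv A = 0" "pderiv B = 0"
    using assms by (simp_all add: pderiv_eq_0_iff)
  then show ?thesis
    by (simp add: wronskian_def)
next
  case False
  consider "n = (m - 1) + m" | "n > (m - 1) + m"
    using assms(3) False by linarith
  then show ?thesis
  proof cases
    case 1
    have "coeff (pderiv A * B) n = of_nat m * coeff A m * coeff B m"
      using coeff_mult_degree_sum[of "pderiv A" B] 1 False assms
      by (simp add: degree_pderiv coeff_pderiv)
    moreover have "coeff (A * pderiv B) n = coeff A m * (of_nat m * coeff B m)"
      using coeff_mult_degree_sum[of A "pderiv B"] 1 False assms
      by (simp add: degree_pderiv coeff_pderiv add.commute)
    ultimately show ?thesis
      by (simp add: wronskian_def algebra_simps)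
  next
    case 2
    have "degree (pderiv A * B) < n" "degree (A * pderiv B) < n"
      using 2 assms degree_mult_le[of "pderiv A" B] degree_mult_le[of A "pderiv B"]
      by (simp_all add: degree_pderiv)
    then show ?thesis
      by (simp add: wronskian_def coeff_eq_0)
  qed
qed

lemma is_fps_pade_wronskian_coeff_low:
  fixes A B :: "real poly"
  assumes ODE: "(1 + fps_X) * fps_deriv F + fps_const a * F = 0"
    and "is_fps_pade F m A B" "n < 2 * m"
  shows "coeff ([:1, 1:] * wronskian A B + smult a (A * B)) n = 0"
proof -
  define S where "S = fps_of_poly B * F - fps_of_poly A"
  have S: "fps_nth S i = 0" if "i \<le> 2 * m" for i
    using assms(2) that by (simp add: S_def is_fps_pade_def)
  \<comment> \<open>With A = B F - S and S = O(t^(2m+1)), the ODE leaves only multiples of S and S'.\<close>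
  have ring: "(1 + X) * ((b' * F + b * F' - S') * b - (b * F - S) * b') + c * ((b * F - S) * b)
      = b * b * ((1 + X) * F' + c * F) - (1 + X) * b * S' + ((1 + X) * b' - c * b) * S"
    for b b' F F' S S' X c :: "real fps"
    by (simp add: algebra_simps)
  have A: "fps_of_poly A = fps_of_poly B * F - S"
    by (simp add: S_def)
  have A': "fps_deriv (fps_of_poly A) = fps_deriv (fps_of_poly B) * F + fps_of_poly B * fps_deriv F - fps_deriv S"
    by (simp add: S_def)
  have "fps_of_poly ([:1, 1:] * wronskian A B + smult a (A * B))
      = (1 + fps_X) * (fps_deriv (fps_of_poly A) * fps_of_poly B - fps_of_poly A * fps_deriv (fps_of_poly B))
        + fps_const a * (fps_of_poly A * fps_of_poly B)"
    unfolding wronskian_def fps_of_poly_add fps_of_poly_mult fps_of_poly_diff fps_of_poly_pderiv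
      fps_of_poly_smult by (simp add: fps_of_poly_pCons)
  also have "\<dots> = fps_of_poly B * fps_of_poly B * ((1 + fps_X) * fps_deriv F + fps_const a * F)
      - (1 + fps_X) * fps_of_poly B * fps_deriv S
      + ((1 + fps_X) * fps_deriv (fps_of_poly B) - fps_const a * fps_of_poly B) * S"
    unfolding A' unfolding A by (rule ring)
  finally have eq: "fps_of_poly ([:1, 1:] * wronskian A B + smult a (A * B))
      = - ((1 + fps_X) * fps_of_poly B * fps_deriv S)
        + ((1 + fps_X) * fps_deriv (fps_of_poly B) - fps_const a * fps_of_poly B) * S"
    unfolding ODE by simp
  have "fps_nth (fps_deriv S) i = 0" if "i \<le> n" for i
    using S[of "Suc i"] that assms(3) by simp
  moreover have "fps_nth S i = 0" if "i \<le> n" for i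
    using S that assms(3) by simp
  ultimately show ?thesis
    using fps_nth_mult_cong[of n "fps_deriv S" 0 "(1 + fps_X) * fps_of_poly B"]
      fps_nth_mult_cong[of n S 0 "(1 + fps_X) * fps_deriv (fps_of_poly B) - fps_const a * fps_of_poly B"]
    unfolding fps_of_poly_nth [symmetric] eq by simp
qed

lemma is_fps_pade_wronskian:
  fixes A B :: "real poly"
  assumes ODE: "(1 + fps_X) * fps_deriv F + fps_const a * F = 0"
    and "is_fps_pade F m A B" "degree A = m" "degree B = m"
  shows "[:1, 1:] * wronskian A B + smult a (A * B) = monom (a * coeff A m * coeff B m) (2 * m)"
proof (rule poly_eqI)
  fix n
  consider "n < 2 * m" | "2 * m \<le> n"
    by linarith
  then show "coeff ([:1, 1:] * wronskian A B + smult a (A * B)) n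
      = coeff (monom (a * coeff A m * coeff B m) (2 * m)) n"
  proof cases
    case 1
    then show ?thesis
      using is_fps_pade_wronskian_coeff_low[OF assms(1,2) 1] by simp
  next
    case 2
    have "coeff ([:1, 1:] * wronskian A B) n = 0"
      using 2 coeff_wronskian_eq_0[OF assms(3,4)]
      by (cases n) (simp_all add: mult_pCons_left)
    moreover have "coeff (A * B) n = (if n = 2 * m then coeff A m * coeff B m else 0)"
      using 2 coeff_mult_degree_sum[of A B] assms(3,4) degree_mult_le[of A B]
      by (auto simp: mult_2 intro: coeff_eq_0)
    ultimately show ?thesis
      by simp
  qed
qed

lemma coprime_if_wronskian_eq_monom:
  fixes A B :: "'a :: field_gcd poly"
  assumes "[:1, 1:] * wronskian A B + smult a (A * B) = monom c n" "c \<noteq> 0" "poly B 0 \<noteq> 0"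
  shows "coprime A B"
proof (rule coprimeI)
  fix d
  assume d: "d dvd A" "d dvd B"
  then have "d dvd wronskian A B"
    unfolding wronskian_def by (auto intro: dvd_diff dvd_mult dvd_mult2)
  then have "d dvd [:1, 1:] * wronskian A B"
    by (rule dvd_mult)
  moreover have "d dvd smult a (A * B)"
    using d(1) by (intro dvd_smult dvd_mult2)
  ultimately have "d dvd [:1, 1:] * wronskian A B + smult a (A * B)"
    by (rule dvd_add)
  then have "d dvd smult c ([:0, 1:] ^ n)"
    unfolding assms(1) monom_altdef .
  then have "d dvd [:0, 1:] ^ n"
    using assms(2) by (rule dvd_smult_cancel)
  moreover have "coprime B ([:0, 1:] ^ n)"
  proof -
    have "\<not> [:0, 1:] dvd B"
      using assms(3) by (simp add: dvd_iff_poly_eq_0)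
    moreover have "prime_elem [:0, 1 :: 'a:]"
      by (rule prime_elem_linear_field_poly) simp
    ultimately have "coprime [:0, 1:] B"
      by (simp add: prime_elem_imp_coprime)
    then show ?thesis
      by (simp add: coprime_commute)
  qed
  ultimately show "is_unit d"
    using d(2) coprime_common_divisor by blast
qed

lemma coeff_mult_power_le_poly:
  fixes p :: "'a :: linordered_idom poly"
  assumes "\<And>i. coeff p i \<ge> 0" "t \<ge> 0"
  shows "coeff p j * t ^ j \<le> poly p t"
proof (cases "j \<le> degree p")
  case True
  then show ?thesis
    unfolding poly_altdef using assms by (intro member_le_sum) auto
next
  case False
  then show ?thesis
    unfolding poly_altdef using assms by (simp add: coeff_eq_0 sum_nonneg)
qed

lemma poly_wronskian_nonpos:
  fixes A B :: "real poly"
  assumes W: "[:1, 1:] * wronskian A B + smult a (A * B) = monom (a * coeff A m * coeff B m) (2 * m)"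
    and "a \<ge> 0" "\<And>i. coeff A i \<ge> 0" "\<And>i. coeff B i \<ge> 0" "t \<ge> 0"
  shows "poly (wronskian A B) t \<le> 0"
proof -
  have "coeff A 0 \<le> poly A t"
    using coeff_mult_power_le_poly[of A t 0] assms(3,5) by simp
  then have "0 \<le> poly A t"
    using assms(3)[of 0] by linarith
  moreover have "0 \<le> coeff B m * t ^ m"
    using assms(4,5) by simp
  ultimately have "(coeff A m * t ^ m) * (coeff B m * t ^ m) \<le> poly A t * poly B t"
    using assms(3-5) coeff_mult_power_le_poly[of A t m] coeff_mult_power_le_poly[of B t m]
    by (intro mult_mono) auto
  then have "a * (coeff A m * coeff B m * t ^ (2 * m)) \<le> a * (poly A t * poly B t)"
    using \<open>a \<ge> 0\<close> by (intro mult_left_mono) (simp_all add: mult_2 mult_2_right power_add algebra_simps)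
  moreover have "(1 + t) * poly (wronskian A B) t + a * (poly A t * poly B t)
      = a * (coeff A m * coeff B m * t ^ (2 * m))"
    using arg_cong[OF W, of "\<lambda>p. poly p t"] by (simp add: poly_monom algebra_simps)
  ultimately have "(1 + t) * poly (wronskian A B) t \<le> 0"
    by linarith
  with \<open>t \<ge> 0\<close> show ?thesis
    by (simp add: mult_le_0_iff)
qed

lemma antimono_on_poly_divide:
  fixes A B :: "real poly"
  assumes "\<And>t. t \<ge> 0 \<Longrightarrow> poly B t \<noteq> 0" "\<And>t. t \<ge> 0 \<Longrightarrow> poly (wronskian A B) t \<le> 0"
  shows "antimono_on {0..} (\<lambda>t. poly A t / poly B t)"
proof (rule monotone_onI)
  fix x y :: real
  assume xy: "x \<in> {0..}" "y \<in> {0..}" "x \<le> y"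
  show "poly A y / poly B y \<le> poly A x / poly B x"
  proof (rule DERIV_nonpos_imp_nonincreasing[OF xy(3)])
    fix t
    assume "x \<le> t" "t \<le> y"
    with xy have "t \<ge> 0"
      by simp
    have "DERIV (\<lambda>t. poly A t / poly B t) t :> poly (wronskian A B) t / (poly B t * poly B t)"
      using DERIV_divide[OF poly_DERIV poly_DERIV assms(1)[OF \<open>t \<ge> 0\<close>]]
      by (simp add: wronskian_def)
    moreover have "poly (wronskian A B) t / (poly B t * poly B t) \<le> 0"
      using assms(2)[OF \<open>t \<ge> 0\<close>] by (intro divide_nonpos_nonneg) auto
    ultimately show "\<exists>d. DERIV (\<lambda>t. poly A t / poly B t) t :> d \<and> d \<le> 0"
      by blast
  qed
qed

theorem mainTheorem3:
  fixes \<alpha> :: real and m :: nat and P Q :: "real poly"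
  assumes "0 < \<alpha>" "\<alpha> < 1" "m \<ge> 1"
    and "is_pade_mm \<alpha> m P Q"
  shows "antimono_on {0..} (\<lambda>t. poly P t / poly Q t)"
proof -
  let ?F = "fps_binomial (-\<alpha>)" and ?A = "hypergeom_poly m \<alpha>" and ?B = "hypergeom_poly m (-\<alpha>)"
  have ODE: "(1 + fps_X) * fps_deriv ?F + fps_const \<alpha> * ?F = 0"
    by (rule fps_binomial_uminus_ODE)
  have pade: "is_fps_pade ?F m ?A ?B"
    using ODE by (rule is_fps_pade_hypergeom_poly) simp
  have \<alpha>: "\<bar>\<alpha>\<bar> < 1" "\<bar>-\<alpha>\<bar> < 1"
    using assms(1,2) by simp_all
  have W: "[:1, 1:] * wronskian ?A ?B + smult \<alpha> (?A * ?B) = monom (\<alpha> * coeff ?A m * coeff ?B m) (2 * m)"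
    using ODE pade by (rule is_fps_pade_wronskian) (simp_all add: degree_hypergeom_poly \<alpha>)
  have "\<alpha> * coeff ?A m * coeff ?B m \<noteq> 0"
    using assms(1) hypergeom_coeff_pos[OF \<alpha>(1), of m m] hypergeom_coeff_pos[OF \<alpha>(2), of m m]
    by simp
  then have "coprime ?A ?B"
    by (rule coprime_if_wronskian_eq_monom[OF W]) simp
  then have PQ: "P = ?A \<and> Q = ?B"
    using is_fps_pade_unique[OF pade is_pade_mm_imp_is_fps_pade[OF assms(4)]] assms(4)
    by (simp add: degree_hypergeom_poly \<alpha> is_pade_mm_def)
  have "poly ?B t \<ge> 1" if "t \<ge> 0" for t
    using coeff_mult_power_le_poly[of ?B t 0] that hypergeom_coeff_nonneg[OF \<alpha>(2)] by simp
  moreover have "poly (wronskian ?A ?B) t \<le> 0" if "t \<ge> 0" for t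
    using assms(1) hypergeom_coeff_nonneg[OF \<alpha>(1)] hypergeom_coeff_nonneg[OF \<alpha>(2)] that
    by (intro poly_wronskian_nonpos[OF W]) simp_all
  ultimately show ?thesis
    unfolding PQ[THEN conjunct1] PQ[THEN conjunct2] by (intro antimono_on_poly_divide) force+
qed

end
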